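(* Let $k,\ell>0$, $\pi_1\in\mathcal{T}_k$, $\pi_2\in\mathcal{T}_\ell$, let $t=\operatorname{slmax}(\pi_2)$, let $a_1,\dots,a_t$ be the values of the left-to-right maxima of $\mathcal{S}(\pi_2)$ in order, and let $1\le i\le t$. Let $$\pi=C_2(\pi_1,\pi_2,i)=\pi_1^{+(0,k,a_i)}\cdot(k+\ell+1)\cdot\pi_2^{+(k-1,a_i+1,k)}.$$ Then $\pi\in\mathcal{T}_{k+\ell+1}$, and $\operatorname{slmax}(\pi)=\operatorname{slmax}(\pi_1)+\operatorname{slmax}(\pi_2)-i+1$.
   Context: For a finite sequence $A$ of distinct integers, the stack-sorting operator $\mathcal{S}$ is defined by $\mathcal{S}(\epsilon)=\epsilon$ for the empty sequence and, if $A$ is non-empty with largest element $m$, writing $A=A_L\cdot(m)\cdot A_R$ (concatenation), $\mathcal{S}(A)=\mathcal{S}(A_L)\cdot\mathcal{S}(A_R)\cdot(m)$. For $n\ge1$, $\mathcal{T}_n$ is the set of permutations $\sigma\in\mathfrak{S}_n$ (viewed as sequences) with $\mathcal{S}(\mathcal{S}(\sigma))$ equal to the identity. For a sequence $\tau$ of integers and $k_1<k_2$, $\tau^{+(k_1,m,k_2)}$ is obtained by adding $k_1$ to each element strictly smaller than $m$ and $k_2$ to every other element. For a permutation $\sigma$, $\operatorname{slmax}(\sigma)$ is the number of left-to-right maxima of $\mathcal{S}(\sigma)$ (indices $i$ such that $\mathcal{S}(\sigma)(i)>\mathcal{S}(\sigma)(j)$ for all $j<i$). *)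

theory Defs
  imports Main
begin

text \<open>Sequences are lists of natural numbers (permutations use values 1..n).
  The stack-sorting operator S: split at the maximum m, A = A_L m A_R,
  S(A) = S(A_L) S(A_R) m.\<close>

lemma takeWhile_neq_shorter:
  "m \<in> set xs \<Longrightarrow> length (takeWhile (\<lambda>y. y \<noteq> m) xs) < length xs"
  by (induction xs) auto

lemma tl_dropWhile_shorter:
  "xs \<noteq> [] \<Longrightarrow> length (tl (dropWhile P xs)) < length xs"
  using length_dropWhile_le[of P xs] by (cases xs) auto

function ssort :: "nat list \<Rightarrow> nat list" where
  "ssort [] = []"
| "ssort (x # xs) =
     (let m = Max (set (x # xs)) in
        ssort (takeWhile (\<lambda>y. y \<noteq> m) (x # xs))
        @ ssort (tl (dropWhile (\<lambda>y. y \<noteq> m) (x # xs))) @ [m])"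
  by pat_completeness auto
termination
  apply (relation "measure length")
    apply simp
   apply (simp only: in_measure)
   apply (rule takeWhile_neq_shorter)
   apply (metis List.finite_set Max_in list.set_intros(1) empty_iff set_ConsD)
  apply (simp only: in_measure)
  apply (rule tl_dropWhile_shorter) apply simp
  done

definition perms :: "nat \<Rightarrow> nat list set" where
  "perms n = {\<sigma>. distinct \<sigma> \<and> set \<sigma> = {1..n}}"

definition T :: "nat \<Rightarrow> nat list set" where
  "T n = {\<sigma> \<in> perms n. ssort (ssort \<sigma>) = [1..<n+1]}"

definition shift :: "nat \<Rightarrow> nat \<Rightarrow> nat \<Rightarrow> nat list \<Rightarrow> nat list" where
  "shift k1 m k2 xs = map (\<lambda>x. if x < m then x + k1 else x + k2) xs"

definition ltr_max_vals :: "nat list \<Rightarrow> nat list" where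
  "ltr_max_vals xs = [xs ! i. i \<leftarrow> [0..<length xs], \<forall>j<i. xs ! j < xs ! i]"

definition slmax :: "nat list \<Rightarrow> nat" where
  "slmax \<sigma> = length (ltr_max_vals (ssort \<sigma>))"

end

theory Submission
  imports Defs "HOL-Library.Multiset"
begin

text \<open>Two facts about stack-sorting drive the proof. First, S(w) is increasing exactly when w
  avoids the pattern 231, so a permutation lies in T_n iff its image under S avoids 231. Second,
  since k + l + 1 is the largest entry of pi, S(pi) is the shifted S(pi1), followed by the shifted
  S(pi2), followed by k + l + 1. In this concatenation every entry coming from S(pi1) is smaller
  than every entry coming from S(pi2), except the image k + a_i of the maximum k; a 231 pattern
  through k + a_i would give one in S(pi2) through its left-to-right maximum a_i. The left-to-right
  maxima of S(pi) are those of S(pi1), then those of S(pi2) exceeding a_i, i.e. the last t - i of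
  them, and finally k + l + 1 itself.\<close>

section \<open>Stack-sorting\<close>

lemma split_at_elem:
  "m \<in> set w \<Longrightarrow> w = takeWhile (\<lambda>y. y \<noteq> m) w @ m # tl (dropWhile (\<lambda>y. y \<noteq> m) w)"
  by (induction w) auto

lemma ssort_Cons_split:
  "ssort (x # xs) =
     ssort (takeWhile (\<lambda>y. y \<noteq> Max (set (x # xs))) (x # xs))
     @ ssort (tl (dropWhile (\<lambda>y. y \<noteq> Max (set (x # xs))) (x # xs))) @ [Max (set (x # xs))]"
  by (simp add: Let_def)

lemma mset_ssort [simp]: "mset (ssort w) = mset w"
proof (induction w rule: ssort.induct)
  case (2 x xs)
  let ?m = "Max (set (x # xs))"
  have "?m \<in> set (x # xs)" by (rule Max_in) auto
  then have "mset (x # xs) =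
      mset (takeWhile (\<lambda>y. y \<noteq> ?m) (x # xs)) + mset (tl (dropWhile (\<lambda>y. y \<noteq> ?m) (x # xs))) + {#?m#}"
    by (subst split_at_elem) auto
  with 2 show ?case
    by (simp only: ssort_Cons_split mset_append) simp
qed simp

lemma set_ssort [simp]: "set (ssort w) = set w"
  by (rule mset_eq_setD) simp

lemma distinct_ssort [simp]: "distinct (ssort w) \<longleftrightarrow> distinct w"
  by (rule mset_eq_imp_distinct_iff) simp

lemma ssort_append_max:
  assumes "\<forall>x\<in>set xs. x < m" and "\<forall>y\<in>set ys. y < m"
  shows "ssort (xs @ m # ys) = ssort xs @ ssort ys @ [m]"
proof -
  have max: "Max (set (xs @ m # ys)) = m"
    using assms by (intro Max_eqI) auto
  have take: "takeWhile (\<lambda>y. y \<noteq> m) (xs @ m # ys) = xs"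
    using assms by (subst takeWhile_append2) auto
  have drop: "dropWhile (\<lambda>y. y \<noteq> m) (xs @ m # ys) = m # ys"
    using assms by (subst dropWhile_append2) auto
  obtain z zs where eq: "xs @ m # ys = z # zs"
    by (cases xs) auto
  from ssort_Cons_split[of z zs] show ?thesis
    unfolding eq[symmetric] max take drop list.sel(3) .
qed

lemma ssort_map:
  assumes "strict_mono f"
  shows "ssort (map f w) = map f (ssort w)"
proof (induction w rule: ssort.induct)
  case (2 x xs)
  let ?m = "Max (set (x # xs))"
  have max: "Max (set (map f (x # xs))) = f ?m"
    using assms by (simp add: mono_Max_commute strict_mono_mono)
  have neq: "(\<lambda>y. y \<noteq> f ?m) \<circ> f = (\<lambda>y. y \<noteq> ?m)"
    using assms by (auto simp: strict_mono_eq)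
  have "ssort (map f (x # xs)) =
      ssort (takeWhile (\<lambda>y. y \<noteq> f ?m) (map f (x # xs)))
      @ ssort (tl (dropWhile (\<lambda>y. y \<noteq> f ?m) (map f (x # xs)))) @ [f ?m]"
    using ssort_Cons_split[of "f x" "map f xs"] unfolding list.map(2)[symmetric] max .
  also have "\<dots> = map f (ssort (takeWhile (\<lambda>y. y \<noteq> ?m) (x # xs)))
      @ map f (ssort (tl (dropWhile (\<lambda>y. y \<noteq> ?m) (x # xs)))) @ [f ?m]"
    using "2.IH"[OF refl] by (simp only: takeWhile_map dropWhile_map neq map_tl)
  also have "\<dots> = map f (ssort (x # xs))"
    unfolding ssort_Cons_split[of x xs] by simp
  finally show ?case .
qed simp

section \<open>231-avoidance\<close>

definition avoids_231 :: "nat list \<Rightarrow> bool" where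
  "avoids_231 w \<longleftrightarrow>
     (\<forall>p q r. p < q \<longrightarrow> q < r \<longrightarrow> r < length w \<longrightarrow> \<not> (w ! r < w ! p \<and> w ! p < w ! q))"

lemma avoids_231_map:
  "strict_mono f \<Longrightarrow> avoids_231 (map f w) \<longleftrightarrow> avoids_231 w"
  unfolding avoids_231_def by (auto simp: strict_mono_less)

lemma avoids_231_appendD:
  assumes "avoids_231 (xs @ ys)"
  shows "avoids_231 xs" and "avoids_231 ys"
proof -
  show "avoids_231 xs"
    unfolding avoids_231_def
  proof (intro allI impI)
    fix p q r assume "p < q" "q < r" "r < length xs"
    then show "\<not> (xs ! r < xs ! p \<and> xs ! p < xs ! q)"
      using assms[unfolded avoids_231_def, rule_format, of p q r] by (simp add: nth_append)
  qed
  show "avoids_231 ys"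
    unfolding avoids_231_def
  proof (intro allI impI)
    fix p q r assume "p < q" "q < r" "r < length ys"
    then show "\<not> (ys ! r < ys ! p \<and> ys ! p < ys ! q)"
      using assms[unfolded avoids_231_def, rule_format, of "length xs + p" "length xs + q" "length xs + r"]
      by (simp add: nth_append)
  qed
qed

lemma avoids_231_append:
  assumes "avoids_231 xs" and "avoids_231 ys"
    and left: "\<And>p q z. p < q \<Longrightarrow> q < length xs \<Longrightarrow> z \<in> set ys \<Longrightarrow> \<not> (z < xs ! p \<and> xs ! p < xs ! q)"
    and right: "\<And>x q r. x \<in> set xs \<Longrightarrow> q < r \<Longrightarrow> r < length ys \<Longrightarrow> \<not> (ys ! r < x \<and> x < ys ! q)"
  shows "avoids_231 (xs @ ys)"
  unfolding avoids_231_def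
proof (intro allI impI notI)
  fix p q r assume "p < q" "q < r" "r < length (xs @ ys)"
    and pattern: "(xs @ ys) ! r < (xs @ ys) ! p \<and> (xs @ ys) ! p < (xs @ ys) ! q"
  let ?n = "length xs"
  consider "r < ?n" | "q < ?n" "?n \<le> r" | "p < ?n" "?n \<le> q" | "?n \<le> p" by linarith
  then show False
  proof cases
    case 1
    with assms(1) \<open>p < q\<close> \<open>q < r\<close> pattern show False
      unfolding avoids_231_def by (auto simp: nth_append)
  next
    case 2
    with left[of p q "ys ! (r - ?n)"] \<open>p < q\<close> \<open>r < length (xs @ ys)\<close> pattern show False
      by (simp add: nth_append)
  next
    case 3
    moreover have "?n \<le> r" "q - ?n < r - ?n" "r - ?n < length ys"
      using 3 \<open>q < r\<close> \<open>r < length (xs @ ys)\<close> by auto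
    ultimately show False
      using right[of "xs ! p" "q - ?n" "r - ?n"] pattern by (simp add: nth_append)
  next
    case 4
    with assms(2)[unfolded avoids_231_def, rule_format, of "p - ?n" "q - ?n" "r - ?n"]
      \<open>p < q\<close> \<open>q < r\<close> \<open>r < length (xs @ ys)\<close> pattern show False
      by (simp add: nth_append) linarith
  qed
qed

lemma avoids_231_append_max_iff:
  assumes "\<forall>x\<in>set xs. x < m" and "\<forall>y\<in>set ys. y < m"
  shows "avoids_231 (xs @ m # ys) \<longleftrightarrow>
    avoids_231 xs \<and> avoids_231 ys \<and> (\<forall>x\<in>set xs. \<forall>y\<in>set ys. x \<le> y)"
proof
  assume avoids: "avoids_231 (xs @ m # ys)"
  have "x \<le> y" if x: "x \<in> set xs" and y: "y \<in> set ys" for x y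
  proof -
    obtain p where "p < length xs" "xs ! p = x"
      using x by (auto simp: in_set_conv_nth)
    moreover obtain r where "r < length ys" "ys ! r = y"
      using y by (auto simp: in_set_conv_nth)
    ultimately have "\<not> (y < x \<and> x < m)"
      using avoids[unfolded avoids_231_def, rule_format, of p "length xs" "length xs + 1 + r"]
      by (simp add: nth_append)
    with assms(1) x show "x \<le> y" by auto
  qed
  moreover have "avoids_231 xs" and "avoids_231 ([m] @ ys)"
    using avoids_231_appendD[of xs "m # ys"] avoids by simp_all
  ultimately show "avoids_231 xs \<and> avoids_231 ys \<and> (\<forall>x\<in>set xs. \<forall>y\<in>set ys. x \<le> y)"
    using avoids_231_appendD(2) by blast
next
  assume parts: "avoids_231 xs \<and> avoids_231 ys \<and> (\<forall>x\<in>set xs. \<forall>y\<in>set ys. x \<le> y)"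
  have "avoids_231 ([m] @ ys)"
  proof (rule avoids_231_append)
    show "avoids_231 [m]" by (simp add: avoids_231_def)
    show "avoids_231 ys" using parts by simp
  next
    fix x q r assume "x \<in> set [m]" "q < r" "r < length ys"
    then have "x = m" and "ys ! q < m" using assms(2) by auto
    then show "\<not> (ys ! r < x \<and> x < ys ! q)" by simp
  qed simp
  then show "avoids_231 (xs @ m # ys)"
  proof (intro avoids_231_append)
    show "avoids_231 xs" using parts by simp
  next
    fix p q z assume "p < q" "q < length xs" "z \<in> set (m # ys)"
    moreover have "xs ! p < m"
      using assms(1) \<open>p < q\<close> \<open>q < length xs\<close> by simp
    ultimately have "xs ! p \<le> z"
      using parts by auto
    then show "\<not> (z < xs ! p \<and> xs ! p < xs ! q)" by simp
  next
    fix x q r assume "x \<in> set xs" "q < r" "r < length (m # ys)"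
    then have "(m # ys) ! r \<in> set ys"
      by (cases r) auto
    with parts \<open>x \<in> set xs\<close> show "\<not> ((m # ys) ! r < x \<and> x < (m # ys) ! q)"
      by fastforce
  qed simp
qed

lemma avoids_231_snoc_max:
  assumes "\<forall>x\<in>set xs. x < m"
  shows "avoids_231 (xs @ [m]) \<longleftrightarrow> avoids_231 xs"
proof -
  have "avoids_231 []"
    by (simp add: avoids_231_def)
  with avoids_231_append_max_iff[OF assms, of "[]"] show ?thesis
    by simp
qed

lemma sorted_ssort_iff_avoids_231:
  "distinct w \<Longrightarrow> sorted (ssort w) \<longleftrightarrow> avoids_231 w"
proof (induction w rule: ssort.induct)
  case (2 x xs)
  define m where "m = Max (set (x # xs))"
  define L where "L = takeWhile (\<lambda>y. y \<noteq> m) (x # xs)"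
  define R where "R = tl (dropWhile (\<lambda>y. y \<noteq> m) (x # xs))"
  have "m \<in> set (x # xs)"
    unfolding m_def by (rule Max_in) auto
  then have split: "x # xs = L @ m # R"
    unfolding L_def R_def by (rule split_at_elem)
  have "\<forall>y\<in>set (x # xs). y \<le> m"
    unfolding m_def by simp
  moreover have "m \<notin> set L" and "m \<notin> set R"
    using "2.prems" unfolding split by auto
  ultimately have L_less: "\<forall>y\<in>set L. y < m" and R_less: "\<forall>y\<in>set R. y < m"
    unfolding split by (auto simp: order.order_iff_strict)
  have ssort_split: "ssort (x # xs) = ssort L @ ssort R @ [m]"
    unfolding L_def R_def m_def by (rule ssort_Cons_split)
  have "sorted (ssort (x # xs)) \<longleftrightarrow>
      sorted (ssort L) \<and> sorted (ssort R) \<and> (\<forall>a\<in>set L. \<forall>b\<in>set R. a \<le> b)"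
    unfolding ssort_split using L_less R_less by (auto simp: sorted_append)
  also have "\<dots> \<longleftrightarrow> avoids_231 (x # xs)"
  proof -
    have "distinct L" and "distinct R"
      using "2.prems" unfolding split by auto
    then have "sorted (ssort L) \<longleftrightarrow> avoids_231 L" and "sorted (ssort R) \<longleftrightarrow> avoids_231 R"
      using "2.IH"(1)[OF m_def, folded L_def] "2.IH"(2)[OF m_def, folded R_def] by blast+
    then show ?thesis
      unfolding split avoids_231_append_max_iff[OF L_less R_less] by simp
  qed
  finally show ?case .
qed (simp add: avoids_231_def)

lemma T_iff_avoids_231: "\<sigma> \<in> T n \<longleftrightarrow> \<sigma> \<in> perms n \<and> avoids_231 (ssort \<sigma>)"
proof (cases "\<sigma> \<in> perms n")
  case True
  moreover have "set [1..<n+1] = {1..n}"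
    by auto
  ultimately have "distinct (ssort (ssort \<sigma>))" and "set (ssort (ssort \<sigma>)) = set [1..<n+1]"
    unfolding perms_def by simp_all
  then have "ssort (ssort \<sigma>) = [1..<n+1] \<longleftrightarrow> sorted (ssort (ssort \<sigma>))"
    by (metis sorted_distinct_set_unique sorted_upt distinct_upt)
  moreover have "sorted (ssort (ssort \<sigma>)) \<longleftrightarrow> avoids_231 (ssort \<sigma>)"
    using True unfolding perms_def by (simp add: sorted_ssort_iff_avoids_231)
  ultimately show ?thesis
    using True unfolding T_def by blast
qed (simp add: T_def)

section \<open>Left-to-right maxima\<close>

fun ltr_maxima_above :: "nat \<Rightarrow> nat list \<Rightarrow> nat list" where
  "ltr_maxima_above c [] = []"
| "ltr_maxima_above c (x # xs) =
     (if c < x then x # ltr_maxima_above x xs else ltr_maxima_above c xs)"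

lemma ltr_maxima_above_conv_nth:
  "ltr_maxima_above c xs =
     map ((!) xs) (filter (\<lambda>i. c < xs ! i \<and> (\<forall>j<i. xs ! j < xs ! i)) [0..<length xs])"
proof (induction xs arbitrary: c)
  case Nil
  then show ?case by simp
next
  case (Cons x xs)
  have upt: "[0..<length (x # xs)] = 0 # map Suc [0..<length xs]"
    by (simp add: map_Suc_upt upt_conv_Cons del: upt_Suc)
  have "(\<lambda>i. c < (x # xs) ! Suc i \<and> (\<forall>j<Suc i. (x # xs) ! j < (x # xs) ! Suc i))
      = (\<lambda>i. max c x < xs ! i \<and> (\<forall>j<i. xs ! j < xs ! i))"
    by (auto simp: less_Suc_eq_0_disj fun_eq_iff)
  then show ?case
    unfolding upt using Cons.IH[of x] Cons.IH[of c]
    by (simp add: filter_map o_def max_def del: upt_Suc)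
qed

lemma ltr_max_vals_eq_ltr_maxima_above:
  assumes "0 \<notin> set xs"
  shows "ltr_max_vals xs = ltr_maxima_above 0 xs"
proof -
  have "concat (map (\<lambda>i. if \<forall>j<i. xs ! j < xs ! i then [xs ! i] else []) is)
      = map ((!) xs) (filter (\<lambda>i. 0 < xs ! i \<and> (\<forall>j<i. xs ! j < xs ! i)) is)"
    if "\<forall>i\<in>set is. i < length xs" for "is"
    using that assms by (induction "is") (auto intro!: gr0I dest: nth_mem)
  from this[of "[0..<length xs]"] show ?thesis
    unfolding ltr_max_vals_def ltr_maxima_above_conv_nth by simp
qed

lemma set_ltr_max_vals_subset: "set (ltr_max_vals xs) \<subseteq> set xs"
  by (auto simp: ltr_max_vals_def)

lemma slmax_eq_length_ltr_maxima_above: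
  "\<sigma> \<in> perms n \<Longrightarrow> slmax \<sigma> = length (ltr_maxima_above 0 (ssort \<sigma>))"
  by (simp add: slmax_def perms_def ltr_max_vals_eq_ltr_maxima_above)

lemma ltr_maxima_above_append:
  "ltr_maxima_above c (xs @ ys) = ltr_maxima_above c xs @ ltr_maxima_above (fold max xs c) ys"
  by (induction xs arbitrary: c) (auto simp: max_def)

lemma ltr_maxima_above_map:
  "strict_mono f \<Longrightarrow> ltr_maxima_above (f c) (map f xs) = map f (ltr_maxima_above c xs)"
  by (induction xs arbitrary: c) (auto simp: strict_mono_less)

lemma ltr_maxima_above_cong:
  "\<forall>x\<in>set xs. c < x \<longleftrightarrow> d < x \<Longrightarrow> ltr_maxima_above c xs = ltr_maxima_above d xs"
  by (induction xs arbitrary: c d) auto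

lemma ltr_maxima_above_gt: "y \<in> set (ltr_maxima_above c xs) \<Longrightarrow> c < y"
proof (induction xs arbitrary: c)
  case (Cons x xs)
  then show ?case
    by (cases "c < x") (auto dest: Cons.IH)
qed simp

lemma ltr_maxima_above_nth:
  "j < length (ltr_maxima_above c xs) \<Longrightarrow>
     ltr_maxima_above (ltr_maxima_above c xs ! j) xs = drop (Suc j) (ltr_maxima_above c xs)"
proof (induction xs arbitrary: c j)
  case (Cons x xs)
  show ?case
  proof (cases "c < x")
    case True
    show ?thesis
    proof (cases j)
      case (Suc j')
      with Cons.prems True have j': "j' < length (ltr_maxima_above x xs)"
        by simp
      then have "x < ltr_maxima_above x xs ! j'"
        using ltr_maxima_above_gt nth_mem by blast
      with True Suc Cons.IH[OF j'] show ?thesis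
        by simp
    qed (use True in simp)
  next
    case False
    with Cons.prems have j: "j < length (ltr_maxima_above c xs)"
      by simp
    then have "c < ltr_maxima_above c xs ! j"
      using ltr_maxima_above_gt nth_mem by blast
    with False Cons.IH[OF j] show ?thesis
      by simp
  qed
qed simp

lemma avoids_231_ltr_max_less:
  assumes "avoids_231 w" and "distinct w" and "a \<in> set (ltr_max_vals w)"
    and "a < w ! q" and "q < r" and "r < length w"
  shows "a < w ! r"
proof -
  obtain s where s: "s < length w" "w ! s = a" "\<forall>j<s. w ! j < a"
    using assms(3) by (auto simp: ltr_max_vals_def)
  have "s < q"
    using s assms(4) by (metis less_asym not_less_iff_gr_or_eq)
  with assms(2,5,6) s have "w ! r \<noteq> a"
    by (metis less_trans nat_neq_iff nth_eq_iff_index_eq)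
  moreover have "\<not> (w ! r < w ! s \<and> w ! s < w ! q)"
    using assms(1,5,6) \<open>s < q\<close> unfolding avoids_231_def by blast
  ultimately show ?thesis
    using s assms(4) by auto
qed

section \<open>Shifted concatenations\<close>

definition shift_elem :: "nat \<Rightarrow> nat \<Rightarrow> nat \<Rightarrow> nat \<Rightarrow> nat" where
  "shift_elem k1 m k2 x = (if x < m then x + k1 else x + k2)"

lemma shift_eq_map: "shift k1 m k2 = map (shift_elem k1 m k2)"
  by (simp add: shift_def shift_elem_def fun_eq_iff)

lemma strict_mono_shift_elem: "k1 \<le> k2 \<Longrightarrow> strict_mono (shift_elem k1 m k2)"
  by (rule strict_monoI) (auto simp: shift_elem_def)

lemma ssort_shift: "k1 \<le> k2 \<Longrightarrow> ssort (shift k1 m k2 w) = shift k1 m k2 (ssort w)"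
  by (simp add: shift_eq_map ssort_map strict_mono_shift_elem)

lemma avoids_231_shift: "k1 \<le> k2 \<Longrightarrow> avoids_231 (shift k1 m k2 w) \<longleftrightarrow> avoids_231 w"
  by (simp add: shift_eq_map avoids_231_map strict_mono_shift_elem)

lemma set_shift_low:
  assumes "set xs \<subseteq> {1..k}"
  shows "set (shift 0 k a xs) \<subseteq> {1..<k} \<union> {k + a}"
  using assms by (auto simp: shift_def)

lemma set_shift_high:
  assumes "set ys \<subseteq> {1..l}" and "0 < k"
  shows "set (shift (k - 1) (a + 1) k ys) \<subseteq> {k..k + l} - {k + a}"
  using assms by (fastforce simp: shift_def subset_iff)

lemma shift_append_less:
  assumes "set xs \<subseteq> {1..k}" and "set ys \<subseteq> {1..l}" and "0 < k" and "a \<le> l"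
  shows "\<forall>x\<in>set (shift 0 k a xs @ shift (k - 1) (a + 1) k ys). x < k + l + 1"
  using set_shift_low[OF assms(1), of a] set_shift_high[OF assms(2,3), of a] assms(4) by fastforce

lemma avoids_231_shift_append:
  assumes "avoids_231 A" and "avoids_231 B" and "set A \<subseteq> {1..k}" and "set B \<subseteq> {1..l}"
    and "0 < k" and "distinct B" and "a \<in> set (ltr_max_vals B)"
  shows "avoids_231 (shift 0 k a A @ shift (k - 1) (a + 1) k B)"
proof -
  let ?X = "shift 0 k a A" and ?Y = "shift (k - 1) (a + 1) k B"
  have X: "\<And>x. x \<in> set ?X \<Longrightarrow> x < k \<or> x = k + a"
    using set_shift_low[OF assms(3), of a] by fastforce
  have Y: "\<And>y. y \<in> set ?Y \<Longrightarrow> k \<le> y"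
    using set_shift_high[OF assms(4,5), of a] by fastforce
  show ?thesis
  proof (rule avoids_231_append)
    show "avoids_231 ?X" and "avoids_231 ?Y"
      using assms(1,2) by (simp_all add: avoids_231_shift)
  next
    fix p q z
    assume "p < q" "q < length ?X" "z \<in> set ?Y"
    then have "?X ! p < k \<or> ?X ! p = k + a" and "?X ! q \<le> k + a" and "k \<le> z"
      using X[of "?X ! p"] X[of "?X ! q"] Y by force+
    then show "\<not> (z < ?X ! p \<and> ?X ! p < ?X ! q)"
      by auto
  next
    fix x q r
    assume x: "x \<in> set ?X" and "q < r" and r: "r < length ?Y"
    show "\<not> (?Y ! r < x \<and> x < ?Y ! q)"
    proof
      assume between: "?Y ! r < x \<and> x < ?Y ! q"
      moreover have "k \<le> ?Y ! r"
        using Y r by simp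
      ultimately have "x = k + a"
        using X[OF x] by linarith
      with between \<open>q < r\<close> r have "B ! r \<le> a" and "a < B ! q"
        by (auto simp: shift_def split: if_splits)
      with avoids_231_ltr_max_less[OF assms(2,6,7)] \<open>q < r\<close> r show False
        by (fastforce simp: shift_def)
    qed
  qed
qed

lemma ltr_maxima_above_shift_append:
  assumes "set A \<subseteq> {1..k}" and "k \<in> set A" and "set B \<subseteq> {1..l}" and "a \<le> l"
  shows "ltr_maxima_above 0 (shift 0 k a A @ shift (k - 1) (a + 1) k B @ [k + l + 1]) =
    shift 0 k a (ltr_maxima_above 0 A) @ shift (k - 1) (a + 1) k (ltr_maxima_above a B) @ [k + l + 1]"
proof -
  let ?f = "shift_elem 0 k a" and ?g = "shift_elem (k - 1) (a + 1) k"
  have "0 < k"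
    using assms(1,2) by auto
  have X: "set (map ?f A) \<subseteq> {1..<k} \<union> {k + a}" and Y: "set (map ?g B) \<subseteq> {k..k + l} - {k + a}"
    using set_shift_low[OF assms(1)] set_shift_high[OF assms(3) \<open>0 < k\<close>] by (simp_all add: shift_eq_map)
  have "fold max (map ?f A) 0 = Max (insert 0 (set (map ?f A)))"
    by (metis Max.set_eq_fold list.set(2))
  also have "\<dots> = k + a"
  proof (rule Max_eqI)
    show "k + a \<in> insert 0 (set (map ?f A))"
      using assms(2) by (force simp: shift_elem_def)
  qed (use X in auto)
  finally have max_A: "fold max (map ?f A) 0 = k + a" .
  have "fold max (map ?g B) (k + a) = Max (insert (k + a) (set (map ?g B)))"
    by (metis Max.set_eq_fold list.set(2))
  also have "\<dots> < k + l + 1"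
    using X Y assms(4) by (subst Max_less_iff) auto
  finally have max_B: "fold max (map ?g B) (k + a) < k + l + 1" .
  have "ltr_maxima_above 0 (map ?f A) = map ?f (ltr_maxima_above 0 A)"
    using ltr_maxima_above_map[OF strict_mono_shift_elem[of 0 a k], of 0 A] \<open>0 < k\<close>
    by (simp add: shift_elem_def)
  moreover have "ltr_maxima_above (k + a) (map ?g B) = map ?g (ltr_maxima_above a B)"
  proof -
    have "ltr_maxima_above (k + a) (map ?g B) = ltr_maxima_above (?g a) (map ?g B)"
      by (rule ltr_maxima_above_cong) (auto simp: shift_elem_def)
    then show ?thesis
      using ltr_maxima_above_map[OF strict_mono_shift_elem[of "k - 1" k "a + 1"], of a B] by simp
  qed
  ultimately show ?thesis
    using max_B by (simp add: shift_eq_map ltr_maxima_above_append max_A)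
qed

text \<open>The permutation C_2(pi1, pi2, i), parametrised by the value a = a_i instead of the index i.\<close>

definition glue :: "nat \<Rightarrow> nat \<Rightarrow> nat \<Rightarrow> nat list \<Rightarrow> nat list \<Rightarrow> nat list" where
  "glue k l a \<pi>1 \<pi>2 = shift 0 k a \<pi>1 @ [k + l + 1] @ shift (k - 1) (a + 1) k \<pi>2"

lemma glue_in_perms:
  assumes "\<pi>1 \<in> perms k" and "\<pi>2 \<in> perms l" and "0 < k" and "a \<le> l"
  shows "glue k l a \<pi>1 \<pi>2 \<in> perms (k + l + 1)"
proof -
  let ?X = "shift 0 k a \<pi>1" and ?Y = "shift (k - 1) (a + 1) k \<pi>2"
  have X: "set ?X \<subseteq> {1..<k} \<union> {k + a}" and Y: "set ?Y \<subseteq> {k..k + l} - {k + a}"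
    using assms set_shift_low[of \<pi>1 k a] set_shift_high[of \<pi>2 l k a] by (auto simp: perms_def)
  have "distinct ?X" and "distinct ?Y"
    using assms by (auto simp: perms_def shift_eq_map distinct_map strict_mono_shift_elem
        intro: strict_mono_imp_inj_on)
  moreover have "set ?X \<inter> set ?Y = {}"
    using X Y by (fastforce simp: subset_iff)
  moreover have "k + l + 1 \<notin> set ?X \<union> set ?Y"
    using X Y assms(4) by auto
  ultimately have dist: "distinct (glue k l a \<pi>1 \<pi>2)"
    by (auto simp: glue_def)
  have "set (glue k l a \<pi>1 \<pi>2) \<subseteq> {1..k + l + 1}"
    using X Y assms(3,4) by (fastforce simp: glue_def subset_iff)
  moreover have "card (set (glue k l a \<pi>1 \<pi>2)) = card {1..k + l + 1}"
    using assms(1,2) distinct_card[OF dist] distinct_card[of \<pi>1] distinct_card[of \<pi>2]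
    by (auto simp: glue_def perms_def shift_def)
  ultimately show ?thesis
    using dist card_subset_eq[of "{1..k + l + 1}"] by (simp add: perms_def)
qed

lemma ssort_glue:
  assumes "\<pi>1 \<in> perms k" and "\<pi>2 \<in> perms l" and "0 < k" and "a \<le> l"
  shows "ssort (glue k l a \<pi>1 \<pi>2) =
    shift 0 k a (ssort \<pi>1) @ shift (k - 1) (a + 1) k (ssort \<pi>2) @ [k + l + 1]"
  using shift_append_less[of \<pi>1 k \<pi>2 l a] assms
  by (simp add: perms_def glue_def ssort_append_max ssort_shift)

lemma slmax_glue:
  assumes "\<pi>1 \<in> perms k" and "\<pi>2 \<in> perms l" and "0 < k" and "0 < i" and "i \<le> slmax \<pi>2"
  defines "a \<equiv> ltr_max_vals (ssort \<pi>2) ! (i - 1)"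
  shows "slmax (glue k l a \<pi>1 \<pi>2) = slmax \<pi>1 + slmax \<pi>2 - i + 1"
proof -
  have sets: "set (ssort \<pi>1) = {1..k}" "set (ssort \<pi>2) = {1..l}"
    using assms(1,2) by (simp_all add: perms_def)
  have lmax: "ltr_max_vals (ssort \<pi>2) = ltr_maxima_above 0 (ssort \<pi>2)"
    using sets(2) by (simp add: ltr_max_vals_eq_ltr_maxima_above)
  have i: "i - 1 < length (ltr_maxima_above 0 (ssort \<pi>2))"
    using assms(4,5) slmax_eq_length_ltr_maxima_above[OF assms(2)] by simp
  have "a \<le> l"
    using nth_mem[OF i] set_ltr_max_vals_subset[of "ssort \<pi>2"] sets(2)
    unfolding a_def lmax by auto
  have "ltr_maxima_above a (ssort \<pi>2) = drop i (ltr_maxima_above 0 (ssort \<pi>2))"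
    using ltr_maxima_above_nth[OF i] assms(4) unfolding a_def lmax by simp
  moreover have "k \<in> set (ssort \<pi>1)"
    using sets(1) assms(3) by simp
  ultimately have "ltr_maxima_above 0 (ssort (glue k l a \<pi>1 \<pi>2)) =
      shift 0 k a (ltr_maxima_above 0 (ssort \<pi>1))
      @ shift (k - 1) (a + 1) k (drop i (ltr_maxima_above 0 (ssort \<pi>2))) @ [k + l + 1]"
    using ltr_maxima_above_shift_append[of "ssort \<pi>1" k "ssort \<pi>2" l a] sets \<open>a \<le> l\<close>
    by (simp add: ssort_glue[OF assms(1-3) \<open>a \<le> l\<close>])
  then show ?thesis
    using assms(4) i
    by (simp add: slmax_eq_length_ltr_maxima_above[OF glue_in_perms[OF assms(1-3) \<open>a \<le> l\<close>]]
        slmax_eq_length_ltr_maxima_above[OF assms(1)]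
        slmax_eq_length_ltr_maxima_above[OF assms(2)] shift_def)
qed

lemma glue_in_T:
  assumes "\<pi>1 \<in> T k" and "\<pi>2 \<in> T l" and "0 < k" and a: "a \<in> set (ltr_max_vals (ssort \<pi>2))"
  shows "glue k l a \<pi>1 \<pi>2 \<in> T (k + l + 1)"
proof -
  have perms: "\<pi>1 \<in> perms k" "\<pi>2 \<in> perms l"
    and avoid: "avoids_231 (ssort \<pi>1)" "avoids_231 (ssort \<pi>2)"
    using assms(1,2) by (simp_all add: T_iff_avoids_231)
  have "a \<le> l"
    using a set_ltr_max_vals_subset perms(2) by (fastforce simp: perms_def)
  let ?XY = "shift 0 k a (ssort \<pi>1) @ shift (k - 1) (a + 1) k (ssort \<pi>2)"
  have "avoids_231 ?XY"
    by (rule avoids_231_shift_append[OF avoid]) (use perms a assms(3) in \<open>auto simp: perms_def\<close>)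
  moreover have "\<forall>x\<in>set ?XY. x < k + l + 1"
    by (rule shift_append_less) (use perms assms(3) \<open>a \<le> l\<close> in \<open>auto simp: perms_def\<close>)
  ultimately have "avoids_231 (?XY @ [k + l + 1])"
    using avoids_231_snoc_max by blast
  then have "avoids_231 (ssort (glue k l a \<pi>1 \<pi>2))"
    by (simp add: ssort_glue[OF perms assms(3) \<open>a \<le> l\<close>])
  with glue_in_perms[OF perms assms(3) \<open>a \<le> l\<close>] show ?thesis
    by (simp add: T_iff_avoids_231)
qed

theorem proposition6:
  fixes k l i :: nat and \<pi>1 \<pi>2 :: "nat list"
  assumes "k > 0" and "l > 0"
    and "\<pi>1 \<in> T k" and "\<pi>2 \<in> T l"
    and "1 \<le> i" and "i \<le> slmax \<pi>2"
  shows "(let a = ltr_max_vals (ssort \<pi>2) ! (i - 1);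
              \<pi> = shift 0 k a \<pi>1 @ [k + l + 1] @ shift (k - 1) (a + 1) k \<pi>2
          in \<pi> \<in> T (k + l + 1) \<and> slmax \<pi> = slmax \<pi>1 + slmax \<pi>2 - i + 1)"
proof -
  define a where "a = ltr_max_vals (ssort \<pi>2) ! (i - 1)"
  have "i - 1 < length (ltr_max_vals (ssort \<pi>2))"
    using assms(5,6) by (simp add: slmax_def)
  then have "a \<in> set (ltr_max_vals (ssort \<pi>2))"
    unfolding a_def by simp
  with assms(3,4,1) have "glue k l a \<pi>1 \<pi>2 \<in> T (k + l + 1)"
    by (rule glue_in_T)
  moreover have "slmax (glue k l a \<pi>1 \<pi>2) = slmax \<pi>1 + slmax \<pi>2 - i + 1"
    using slmax_glue assms(1,5,6) assms(3,4)[unfolded T_iff_avoids_231] unfolding a_def by simp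
  ultimately show ?thesis
    unfolding a_def[symmetric] glue_def Let_def by simp
qed

end
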